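(* Let $\mathcal{L}$ and $\mathcal{L}'$ be lattices and $f,g:\mathbb{N}\to\mathbb{N}$. If $\mathcal{L}$ is $\Theta(f(n))$ and $\mathcal{L}'$ is $\Theta(g(n))$, then the vertical sum $\mathcal{L}\oplus_v\mathcal{L}'$ and the horizontal sum $\mathcal{L}\oplus_h\mathcal{L}'$ are both $\Theta(f(n)+g(n))$.
   Context: A lattice means a partially ordered set $(\mathcal{L},\sqsubseteq)$ with least element $\bot$ in which any two elements have a least upper bound $\sqcup$; $\bigsqcup S$ denotes the least upper bound of a finite set ($\bigsqcup\emptyset=\bot$). Let $\mathcal{L}\uplus\mathcal{L}'=\{0\}\times\mathcal{L}\cup\{1\}\times\mathcal{L}'$. The vertical sum $\mathcal{L}\oplus_v\mathcal{L}'$ has elements $\mathcal{L}\uplus\mathcal{L}'$ with $\ell\sqsubseteq\ell'$ iff either $\ell=(0,\jmath)$ and $\ell'=(1,\jmath')$, or $\ell=(i,\jmath)$, $\ell'=(i,\jmath')$ and $\jmath\sqsubseteq\jmath'$ (i.e. $\mathcal{L}'$ placed on top of $\mathcal{L}$). The horizontal sum $\mathcal{L}\oplus_h\mathcal{L}'$ has elements $\{0,1\}\cup(\mathcal{L}\uplus\mathcal{L}')$ (with $0,1$ fresh elements) and $\ell\sqsubseteq\ell'$ iff $\ell=0$, or $\ell'=1$, or $\ell=(i,\jmath)$, $\ell'=(i,\jmath')$ and $\jmath\sqsubseteq\jmath'$ (i.e. $\mathcal{L}$ and $\mathcal{L}'$ side by side with a new bottom $0$ and new top $1$). The closure set of a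 finite $S$ is $C(S)=\{\bigsqcup S' : S'\subseteq S\}$, $CS_{\mathcal{L}}(n)=\max\{|C(S)| : S\subseteq\mathcal{L}\text{ finite}, |S|\le n\}$. For $f,g:\mathbb{N}\to\mathbb{N}$, $f$ is $O(g)$ (resp. $\Omega(g)$) iff there exist $N_0\in\mathbb{N}$ and rational $C>0$ with $f(n)\le Cg(n)$ (resp. $f(n)\ge Cg(n)$) for all $n\ge N_0$; $\Theta$ means both. A lattice is $\Theta(f(n))$ iff its $CS$ is. *)

theory Defs
  imports Complex_Main
begin

text \<open>A lattice (in the sense of the paper: a join-semilattice with least element)
  is given by a carrier set A and an order relation le on it.\<close>

definition is_lub :: "'a set \<Rightarrow> ('a \<Rightarrow> 'a \<Rightarrow> bool) \<Rightarrow> 'a set \<Rightarrow> 'a \<Rightarrow> bool" where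
  "is_lub A le S z \<longleftrightarrow> z \<in> A \<and> (\<forall>s\<in>S. le s z) \<and> (\<forall>w\<in>A. (\<forall>s\<in>S. le s w) \<longrightarrow> le z w)"

definition is_lattice :: "'a set \<Rightarrow> ('a \<Rightarrow> 'a \<Rightarrow> bool) \<Rightarrow> bool" where
  "is_lattice A le \<longleftrightarrow>
     (\<forall>x\<in>A. le x x) \<and>
     (\<forall>x\<in>A. \<forall>y\<in>A. le x y \<and> le y x \<longrightarrow> x = y) \<and>
     (\<forall>x\<in>A. \<forall>y\<in>A. \<forall>z\<in>A. le x y \<and> le y z \<longrightarrow> le x z) \<and>
     (\<exists>b\<in>A. \<forall>x\<in>A. le b x) \<and>
     (\<forall>x\<in>A. \<forall>y\<in>A. \<exists>z. is_lub A le {x, y} z)"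

definition closure_set :: "'a set \<Rightarrow> ('a \<Rightarrow> 'a \<Rightarrow> bool) \<Rightarrow> 'a set \<Rightarrow> 'a set" where
  "closure_set A le S = {z. \<exists>S'. S' \<subseteq> S \<and> is_lub A le S' z}"

definition CS :: "'a set \<Rightarrow> ('a \<Rightarrow> 'a \<Rightarrow> bool) \<Rightarrow> nat \<Rightarrow> nat" where
  "CS A le n = Max {card (closure_set A le S) | S. S \<subseteq> A \<and> finite S \<and> card S \<le> n}"

definition bigO :: "(nat \<Rightarrow> nat) \<Rightarrow> (nat \<Rightarrow> nat) \<Rightarrow> bool" where
  "bigO f g \<longleftrightarrow> (\<exists>N0::nat. \<exists>C::rat. C > 0 \<and> (\<forall>n\<ge>N0. of_nat (f n) \<le> C * of_nat (g n)))"

definition bigOmega :: "(nat \<Rightarrow> nat) \<Rightarrow> (nat \<Rightarrow> nat) \<Rightarrow> bool" where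
  "bigOmega f g \<longleftrightarrow> (\<exists>N0::nat. \<exists>C::rat. C > 0 \<and> (\<forall>n\<ge>N0. of_nat (f n) \<ge> C * of_nat (g n)))"

definition bigTheta :: "(nat \<Rightarrow> nat) \<Rightarrow> (nat \<Rightarrow> nat) \<Rightarrow> bool" where
  "bigTheta f g \<longleftrightarrow> bigO f g \<and> bigOmega f g"

text \<open>Vertical sum: carrier Inl`A \<union> Inr`B (Inl = tag 0, Inr = tag 1), B placed on top of A.\<close>
definition vsum_carrier :: "'a set \<Rightarrow> 'b set \<Rightarrow> ('a + 'b) set" where
  "vsum_carrier A B = Inl ` A \<union> Inr ` B"

fun vsum_le :: "('a \<Rightarrow> 'a \<Rightarrow> bool) \<Rightarrow> ('b \<Rightarrow> 'b \<Rightarrow> bool) \<Rightarrow> 'a + 'b \<Rightarrow> 'a + 'b \<Rightarrow> bool" where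
  "vsum_le le le' (Inl a) (Inl b) = le a b"
| "vsum_le le le' (Inr a) (Inr b) = le' a b"
| "vsum_le le le' (Inl a) (Inr b) = True"
| "vsum_le le le' (Inr a) (Inl b) = False"

text \<open>Horizontal sum: fresh bottom HBot (= 0) and top HTop (= 1), A and B side by side.\<close>
datatype ('a, 'b) hsum = HBot | HTop | HL 'a | HR 'b

definition hsum_carrier :: "'a set \<Rightarrow> 'b set \<Rightarrow> ('a, 'b) hsum set" where
  "hsum_carrier A B = {HBot, HTop} \<union> HL ` A \<union> HR ` B"

definition hsum_le :: "('a \<Rightarrow> 'a \<Rightarrow> bool) \<Rightarrow> ('b \<Rightarrow> 'b \<Rightarrow> bool) \<Rightarrow> ('a, 'b) hsum \<Rightarrow> ('a, 'b) hsum \<Rightarrow> bool" where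
  "hsum_le le le' x y \<longleftrightarrow> x = HBot \<or> y = HTop \<or>
     (\<exists>a b. x = HL a \<and> y = HL b \<and> le a b) \<or>
     (\<exists>a b. x = HR a \<and> y = HR b \<and> le' a b)"

end

theory Submission
  imports Defs
begin

text \<open>Both sums contain \<open>A\<close> and \<open>B\<close> as summands: injective order embeddings to whose
  image every other element compares uniformly. Joins of nonempty sets are then computed inside
  each summand, so a closure set of the sum consists of joins in the \<open>A\<close>-part, joins in the
  \<open>B\<close>-part and the \<open>k \<le> 2\<close> fresh elements, whence
  \<open>CS\<^sub>V(n) \<le> k + CS\<^sub>A(n) + CS\<^sub>B(n)\<close>; conversely a closure set of \<open>A\<close> or
  \<open>B\<close> injects into the closure set of its image, whence \<open>CS\<^sub>A(n), CS\<^sub>B(n) \<le> CS\<^sub>V(n)\<close>.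
  As \<open>CS\<^sub>A \<ge> 1\<close>, \<open>CS\<^sub>V\<close> is within constant factors of \<open>CS\<^sub>A + CS\<^sub>B\<close>, which is
  \<open>\<Theta>(f + g)\<close>.\<close>

lemma is_lub_unique:
  assumes "antisymp_on A le" "is_lub A le S x" "is_lub A le S y"
  shows "x = y"
proof -
  have "x \<in> A" "y \<in> A" "le x y" "le y x" using assms(2,3) unfolding is_lub_def by auto
  then show ?thesis using assms(1) unfolding antisymp_on_def by blast
qed

lemma is_lattice_antisymp_on:
  assumes "is_lattice A le"
  shows "antisymp_on A le"
proof -
  have "\<forall>x\<in>A. \<forall>y\<in>A. le x y \<and> le y x \<longrightarrow> x = y"
    using assms unfolding is_lattice_def by (elim conjE) assumption
  then show ?thesis unfolding antisymp_on_def by blast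
qed

lemma is_lattice_obtains_bottom:
  assumes "is_lattice A le"
  obtains b where "is_lub A le {} b"
proof -
  have "\<exists>b\<in>A. \<forall>x\<in>A. le b x"
    using assms unfolding is_lattice_def by (elim conjE) assumption
  then show ?thesis using that unfolding is_lub_def by blast
qed

lemma closure_set_subset: "closure_set A le S \<subseteq> A"
  unfolding closure_set_def is_lub_def by auto

lemma
  assumes "antisymp_on A le" "finite S"
  shows finite_closure_set: "finite (closure_set A le S)"
    and card_closure_set_le_power: "card (closure_set A le S) \<le> 2 ^ card S"
proof -
  let ?join = "\<lambda>S'. THE z. is_lub A le S' z"
  have sub: "closure_set A le S \<subseteq> ?join ` Pow S"
  proof
    fix z assume "z \<in> closure_set A le S"
    then obtain S' where "S' \<subseteq> S" "is_lub A le S' z" unfolding closure_set_def by blast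
    moreover have "?join S' = z"
      using \<open>is_lub A le S' z\<close> is_lub_unique[OF assms(1)] by (intro the_equality)
    ultimately have "z = ?join S'" "S' \<in> Pow S" by auto
    then show "z \<in> ?join ` Pow S" by blast
  qed
  have fin: "finite (?join ` Pow S)" using assms(2) by simp
  show "finite (closure_set A le S)" using finite_subset[OF sub fin] .
  have "card (closure_set A le S) \<le> card (?join ` Pow S)" by (rule card_mono[OF fin sub])
  also have "\<dots> \<le> card (Pow S)" using assms(2) by (intro card_image_le) simp
  also have "\<dots> = 2 ^ card S" using assms(2) by (rule card_Pow)
  finally show "card (closure_set A le S) \<le> 2 ^ card S" .
qed

lemma
  assumes "antisymp_on A le"
  shows card_closure_set_le_CS:
      "\<lbrakk>S \<subseteq> A; finite S; card S \<le> n\<rbrakk> \<Longrightarrow> card (closure_set A le S) \<le> CS A le n"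
    and CS_attained:
      "\<exists>S \<subseteq> A. finite S \<and> card S \<le> n \<and> CS A le n = card (closure_set A le S)"
proof -
  let ?M = "{card (closure_set A le S) | S. S \<subseteq> A \<and> finite S \<and> card S \<le> n}"
  have "?M \<subseteq> {..2 ^ n}"
  proof
    fix m assume "m \<in> ?M"
    then obtain S where "finite S" "card S \<le> n" "m = card (closure_set A le S)" by blast
    moreover have "(2::nat) ^ card S \<le> 2 ^ n" using \<open>card S \<le> n\<close> by (simp add: power_increasing)
    ultimately have "m \<le> 2 ^ n" using card_closure_set_le_power[OF assms \<open>finite S\<close>] by linarith
    then show "m \<in> {..2 ^ n}" by simp
  qed
  then have fin: "finite ?M" by (rule finite_subset) simp
  have "card (closure_set A le {}) \<in> ?M" by (intro CollectI exI[of _ "{}"]) simp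
  then have ne: "?M \<noteq> {}" by blast
  show "card (closure_set A le S) \<le> CS A le n" if "S \<subseteq> A" "finite S" "card S \<le> n" for S
    unfolding CS_def using that by (intro Max_ge[OF fin] CollectI exI[of _ S]) simp
  show "\<exists>S \<subseteq> A. finite S \<and> card S \<le> n \<and> CS A le n = card (closure_set A le S)"
    using Max_in[OF fin ne] unfolding CS_def by auto
qed

lemma CS_pos:
  assumes "antisymp_on A le" "is_lub A le {} b"
  shows "1 \<le> CS A le n"
proof -
  have "b \<in> closure_set A le {}" using assms(2) unfolding closure_set_def by blast
  then have "1 \<le> card (closure_set A le {})"
    using finite_closure_set[OF assms(1)] by (simp add: Suc_le_eq card_gt_0_iff) blast
  also have "\<dots> \<le> CS A le n" by (rule card_closure_set_le_CS[OF assms(1)]) simp_all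
  finally show ?thesis .
qed

text \<open>Each element outside the image of \<open>e\<close> lies below all of it, above all of it, or is
  incomparable to all of it.\<close>
definition summand_embedding ::
    "'c set \<Rightarrow> ('c \<Rightarrow> 'c \<Rightarrow> bool) \<Rightarrow> 'a set \<Rightarrow> ('a \<Rightarrow> 'a \<Rightarrow> bool) \<Rightarrow> ('a \<Rightarrow> 'c) \<Rightarrow> bool" where
  "summand_embedding V leV A le e \<longleftrightarrow> inj e \<and> A = e -` V \<and> (\<forall>x y. leV (e x) (e y) \<longleftrightarrow> le x y) \<and>
     (\<forall>s. s \<notin> range e \<longrightarrow>
        (\<forall>x y. leV s (e x) \<longrightarrow> leV s (e y)) \<and> (\<forall>x y. leV (e x) s \<longrightarrow> leV (e y) s))"

lemma summand_antisymp_on: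
  assumes "summand_embedding V leV A le e" "antisymp_on V leV"
  shows "antisymp_on A le"
  using assms unfolding summand_embedding_def antisymp_on_def inj_def by blast

lemma summand_is_lub_image:
  assumes e: "summand_embedding V leV A le e" and lub: "is_lub A le S z" and "s0 \<in> S"
  shows "is_lub V leV (e ` S) (e z)"
  unfolding is_lub_def
proof (intro conjI ballI impI)
  have A: "A = e -` V" and mono: "\<And>x y. leV (e x) (e y) \<longleftrightarrow> le x y"
    using e unfolding summand_embedding_def by blast+
  show "e z \<in> V" using lub A unfolding is_lub_def by blast
  show "leV s (e z)" if "s \<in> e ` S" for s using that lub mono unfolding is_lub_def by blast
  fix w assume "w \<in> V" and ub: "\<forall>s\<in>e ` S. leV s w"
  show "leV (e z) w"
  proof (cases "w \<in> range e")
    case True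
    then obtain y where "w = e y" by blast
    then show ?thesis using \<open>w \<in> V\<close> ub lub A mono unfolding is_lub_def by auto
  next
    case False
    have "leV (e s0) w" using ub \<open>s0 \<in> S\<close> by blast
    then show ?thesis using False e unfolding summand_embedding_def by blast
  qed
qed

lemma summand_is_lub_vimage:
  assumes e: "summand_embedding V leV A le e" and lub: "is_lub V leV S (e z)"
  shows "is_lub A le (e -` S) z"
  unfolding is_lub_def
proof (intro conjI ballI impI)
  have A: "A = e -` V" and mono: "\<And>x y. leV (e x) (e y) \<longleftrightarrow> le x y"
    using e unfolding summand_embedding_def by blast+
  show "z \<in> A" using lub A unfolding is_lub_def by blast
  show "le x z" if "x \<in> e -` S" for x using that lub mono unfolding is_lub_def by blast
  fix w assume "w \<in> A" and ub: "\<forall>x\<in>e -` S. le x w"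
  have "leV s (e w)" if "s \<in> S" for s
  proof (cases "s \<in> range e")
    case True
    then show ?thesis using that ub mono by auto
  next
    case False
    have "leV s (e z)" using lub \<open>s \<in> S\<close> unfolding is_lub_def by blast
    then show ?thesis using False e unfolding summand_embedding_def by blast
  qed
  moreover have "e w \<in> V" using \<open>w \<in> A\<close> A by blast
  ultimately show "le z w" using lub mono unfolding is_lub_def by blast
qed

lemma closure_set_inter_summand:
  assumes "summand_embedding V leV A le e"
  shows "closure_set V leV S \<inter> range e \<subseteq> e ` closure_set A le (e -` S)"
proof
  fix z' assume "z' \<in> closure_set V leV S \<inter> range e"
  then obtain z S' where "z' = e z" "S' \<subseteq> S" "is_lub V leV S' (e z)"
    unfolding closure_set_def by blast
  moreover have "is_lub A le (e -` S') z" by (rule summand_is_lub_vimage[OF assms \<open>is_lub V leV S' (e z)\<close>])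
  ultimately show "z' \<in> e ` closure_set A le (e -` S)" unfolding closure_set_def by blast
qed

lemma card_closure_set_le_summand:
  assumes e: "summand_embedding V leV A le e" and antisym: "antisymp_on V leV"
    and bot: "is_lub V leV {} botV" and "finite S"
  shows "card (closure_set A le S) \<le> card (closure_set V leV (e ` S))"
proof (rule card_inj_on_le)
  \<comment> \<open>The bottom of \<open>A\<close> need not be mapped to the bottom of \<open>V\<close> (e.g. \<open>Inr\<close> in the
    vertical sum), so it is sent there by hand.\<close>
  let ?\<phi> = "\<lambda>z. if is_lub A le {} z then botV else e z"
  have antisymA: "antisymp_on A le" by (rule summand_antisymp_on[OF e antisym])
  have bot_image: "is_lub A le {} z" if "botV = e z" for z
    using summand_is_lub_vimage[OF e, of "{}" z] bot that by simp
  have "inj e" using e unfolding summand_embedding_def by blast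
  show "inj_on ?\<phi> (closure_set A le S)"
  proof (rule inj_onI)
    fix x y assume "?\<phi> x = ?\<phi> y"
    then show "x = y"
      using is_lub_unique[OF antisymA] bot_image injD[OF \<open>inj e\<close>]
      by (cases "is_lub A le {} x"; cases "is_lub A le {} y") auto
  qed
  show "?\<phi> ` closure_set A le S \<subseteq> closure_set V leV (e ` S)"
  proof
    fix z' assume "z' \<in> ?\<phi> ` closure_set A le S"
    then obtain z S' where z': "z' = ?\<phi> z" and "S' \<subseteq> S" "is_lub A le S' z"
      unfolding closure_set_def by blast
    show "z' \<in> closure_set V leV (e ` S)"
    proof (cases "is_lub A le {} z")
      case True
      then show ?thesis using z' bot unfolding closure_set_def by auto
    next
      case False
      then obtain s0 where "s0 \<in> S'" using \<open>is_lub A le S' z\<close> by (metis ex_in_conv)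
      then have "is_lub V leV (e ` S') (e z)"
        using summand_is_lub_image[OF e \<open>is_lub A le S' z\<close>] by blast
      moreover have "e ` S' \<subseteq> e ` S" using \<open>S' \<subseteq> S\<close> by blast
      ultimately show ?thesis using z' False unfolding closure_set_def by auto
    qed
  qed
  show "finite (closure_set V leV (e ` S))" using finite_closure_set[OF antisym] \<open>finite S\<close> by blast
qed

lemma CS_le_CS_summand:
  assumes e: "summand_embedding V leV A le e" and antisym: "antisymp_on V leV"
    and bot: "is_lub V leV {} botV"
  shows "CS A le n \<le> CS V leV n"
proof -
  obtain S where S: "S \<subseteq> A" "finite S" "card S \<le> n" "CS A le n = card (closure_set A le S)"
    using CS_attained[OF summand_antisymp_on[OF e antisym]] by blast
  have "e ` S \<subseteq> V" using S(1) e unfolding summand_embedding_def by blast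
  moreover have "card (e ` S) \<le> n" using S(3) card_image_le[OF S(2)] by (rule order.trans[rotated])
  ultimately have "card (closure_set V leV (e ` S)) \<le> CS V leV n"
    using S(2) by (intro card_closure_set_le_CS[OF antisym]) simp_all
  then show ?thesis using card_closure_set_le_summand[OF e antisym bot S(2)] S(4) by simp
qed

lemma card_closure_set_summands_le:
  assumes e1: "summand_embedding V leV A le e1" and e2: "summand_embedding V leV B le' e2"
    and antisym: "antisymp_on V leV" and rest: "finite (V - range e1 - range e2)"
    and S: "S \<subseteq> V" "finite S" "card S \<le> n"
  shows "card (closure_set V leV S) \<le> card (V - range e1 - range e2) + CS A le n + CS B le' n"
proof -
  have preimage: "finite (closure_set A' leA (e -` S))" "card (closure_set A' leA (e -` S)) \<le> CS A' leA n"
    if e: "summand_embedding V leV A' leA e" for A' leA e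
  proof -
    have antisymA: "antisymp_on A' leA" by (rule summand_antisymp_on[OF e antisym])
    have "inj e" "A' = e -` V" using e unfolding summand_embedding_def by blast+
    then have "e -` S \<subseteq> A'" "finite (e -` S)" using S(1,2) by (auto intro: finite_vimageI)
    moreover have "card (e -` S) \<le> n" using card_vimage_inj_on_le[OF \<open>inj e\<close> S(2)] S(3) by simp
    ultimately show "finite (closure_set A' leA (e -` S))" "card (closure_set A' leA (e -` S)) \<le> CS A' leA n"
      using finite_closure_set[OF antisymA] card_closure_set_le_CS[OF antisymA] by blast+
  qed
  let ?R = "V - range e1 - range e2"
    and ?CA = "closure_set A le (e1 -` S)" and ?CB = "closure_set B le' (e2 -` S)"
  have "closure_set V leV S \<subseteq> ?R \<union> e1 ` ?CA \<union> e2 ` ?CB"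
    using closure_set_subset[of V leV S] closure_set_inter_summand[OF e1, of S]
      closure_set_inter_summand[OF e2, of S] by blast
  then have "card (closure_set V leV S) \<le> card (?R \<union> e1 ` ?CA \<union> e2 ` ?CB)"
    using rest preimage(1)[OF e1] preimage(1)[OF e2] by (intro card_mono) simp_all
  also have "\<dots> \<le> card ?R + card (e1 ` ?CA) + card (e2 ` ?CB)"
    by (meson card_Un_le add_mono le_refl order.trans)
  also have "\<dots> \<le> card ?R + card ?CA + card ?CB"
    by (intro add_mono card_image_le preimage(1)[OF e1] preimage(1)[OF e2] le_refl)
  also have "\<dots> \<le> card ?R + CS A le n + CS B le' n"
    by (intro add_mono preimage(2)[OF e1] preimage(2)[OF e2] le_refl)
  finally show ?thesis .
qed

lemma bigO_add:
  assumes "bigO a f" "bigO b g"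
  shows "bigO (\<lambda>n. a n + b n) (\<lambda>n. f n + g n)"
proof -
  obtain N1 and C1 :: rat where C1: "C1 > 0" "\<forall>n\<ge>N1. of_nat (a n) \<le> C1 * of_nat (f n)"
    using assms(1) unfolding bigO_def by blast
  obtain N2 and C2 :: rat where C2: "C2 > 0" "\<forall>n\<ge>N2. of_nat (b n) \<le> C2 * of_nat (g n)"
    using assms(2) unfolding bigO_def by blast
  have "of_nat (a n + b n) \<le> (C1 + C2) * of_nat (f n + g n)" if "n \<ge> max N1 N2" for n
  proof -
    have "of_nat (a n + b n) \<le> C1 * of_nat (f n) + C2 * of_nat (g n)"
      using C1(2) C2(2) that by (simp add: add_mono)
    also have "\<dots> \<le> (C1 + C2) * of_nat (f n + g n)"
      using C1(1) C2(1) by (simp add: algebra_simps)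
    finally show ?thesis .
  qed
  then show ?thesis unfolding bigO_def using C1(1) C2(1)
    by (intro exI[of _ "max N1 N2"] exI[of _ "C1 + C2"]) auto
qed

lemma bigOmega_add:
  assumes "bigOmega a f" "bigOmega b g"
  shows "bigOmega (\<lambda>n. a n + b n) (\<lambda>n. f n + g n)"
proof -
  obtain N1 and c1 :: rat where c1: "c1 > 0" "\<forall>n\<ge>N1. of_nat (a n) \<ge> c1 * of_nat (f n)"
    using assms(1) unfolding bigOmega_def by blast
  obtain N2 and c2 :: rat where c2: "c2 > 0" "\<forall>n\<ge>N2. of_nat (b n) \<ge> c2 * of_nat (g n)"
    using assms(2) unfolding bigOmega_def by blast
  have "min c1 c2 * of_nat (f n + g n) \<le> of_nat (a n + b n)" if "n \<ge> max N1 N2" for n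
  proof -
    have "min c1 c2 * of_nat (f n + g n) \<le> c1 * of_nat (f n) + c2 * of_nat (g n)"
      by (simp add: distrib_left add_mono mult_right_mono)
    also have "\<dots> \<le> of_nat (a n + b n)"
      using c1(2) c2(2) that by (simp add: add_mono)
    finally show ?thesis .
  qed
  then show ?thesis unfolding bigOmega_def using c1(1) c2(1)
    by (intro exI[of _ "max N1 N2"] exI[of _ "min c1 c2"]) auto
qed

lemma bigTheta_add:
  "bigTheta a f \<Longrightarrow> bigTheta b g \<Longrightarrow> bigTheta (\<lambda>n. a n + b n) (\<lambda>n. f n + g n)"
  unfolding bigTheta_def using bigO_add bigOmega_add by blast

lemma bigTheta_bounded_ratio:
  fixes c d :: nat
  assumes "bigTheta u h" and lower: "\<And>n. u n \<le> c * v n" and upper: "\<And>n. v n \<le> d * u n"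
  shows "bigTheta v h"
proof -
  obtain N1 and C :: rat where C: "C > 0" "\<forall>n\<ge>N1. of_nat (u n) \<le> C * of_nat (h n)"
    using assms(1) unfolding bigTheta_def bigO_def by blast
  obtain N2 and C' :: rat where C': "C' > 0" "\<forall>n\<ge>N2. of_nat (u n) \<ge> C' * of_nat (h n)"
    using assms(1) unfolding bigTheta_def bigOmega_def by blast
  have "of_nat (v n) \<le> (of_nat d + 1) * C * of_nat (h n)" if "n \<ge> N1" for n
  proof -
    have "(of_nat (v n) :: rat) \<le> of_nat d * of_nat (u n)"
      using upper[of n] by (simp only: of_nat_mult[symmetric] of_nat_le_iff)
    also have "\<dots> \<le> (of_nat d + 1) * of_nat (u n)" by (simp add: algebra_simps)
    also have "\<dots> \<le> (of_nat d + 1) * (C * of_nat (h n))"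
      using C(2) that by (intro mult_left_mono) simp_all
    finally show ?thesis by (simp add: mult.assoc)
  qed
  moreover have "C' / (of_nat c + 1) * of_nat (h n) \<le> of_nat (v n)" if "n \<ge> N2" for n
  proof -
    have "C' * of_nat (h n) \<le> (of_nat (u n) :: rat)" using C'(2) that by blast
    also have "\<dots> \<le> of_nat c * of_nat (v n)"
      using lower[of n] by (simp only: of_nat_mult[symmetric] of_nat_le_iff)
    also have "\<dots> \<le> (of_nat c + 1) * of_nat (v n)" by (simp add: algebra_simps)
    finally show ?thesis by (simp add: field_simps)
  qed
  ultimately show ?thesis
    unfolding bigTheta_def bigO_def bigOmega_def using C(1) C'(1)
    by (intro conjI exI[of _ N1] exI[of _ N2] exI[of _ "(of_nat d + 1) * C"]
        exI[of _ "C' / (of_nat c + 1)"]) (auto simp: add_pos_nonneg)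
qed

lemma summand_embedding_Inl: "summand_embedding (vsum_carrier A B) (vsum_le le le') A le Inl"
proof -
  have "(\<forall>x y. vsum_le le le' s (Inl x) \<longrightarrow> vsum_le le le' s (Inl y)) \<and>
      (\<forall>x y. vsum_le le le' (Inl x) s \<longrightarrow> vsum_le le le' (Inl y) s)" if "s \<notin> range Inl" for s
    using that by (cases s) auto
  then show ?thesis unfolding summand_embedding_def vsum_carrier_def by (auto simp: inj_def)
qed

lemma summand_embedding_Inr: "summand_embedding (vsum_carrier A B) (vsum_le le le') B le' Inr"
proof -
  have "(\<forall>x y. vsum_le le le' s (Inr x) \<longrightarrow> vsum_le le le' s (Inr y)) \<and>
      (\<forall>x y. vsum_le le le' (Inr x) s \<longrightarrow> vsum_le le le' (Inr y) s)" if "s \<notin> range Inr" for s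
    using that by (cases s) auto
  then show ?thesis unfolding summand_embedding_def vsum_carrier_def by (auto simp: inj_def)
qed

lemma antisymp_on_vsum:
  "antisymp_on A le \<Longrightarrow> antisymp_on B le' \<Longrightarrow> antisymp_on (vsum_carrier A B) (vsum_le le le')"
  unfolding antisymp_on_def vsum_carrier_def by auto

lemma is_lub_vsum_bottom:
  "is_lub A le {} b \<Longrightarrow> is_lub (vsum_carrier A B) (vsum_le le le') {} (Inl b)"
  unfolding is_lub_def vsum_carrier_def by auto

lemma vsum_carrier_outside_summands: "vsum_carrier A B - range Inl - range Inr = {}"
  unfolding vsum_carrier_def by (auto intro: sum.exhaust)

lemma summand_embedding_HL: "summand_embedding (hsum_carrier A B) (hsum_le le le') A le HL"
proof -
  have "(\<forall>x y. hsum_le le le' s (HL x) \<longrightarrow> hsum_le le le' s (HL y)) \<and>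
      (\<forall>x y. hsum_le le le' (HL x) s \<longrightarrow> hsum_le le le' (HL y) s)" if "s \<notin> range HL" for s
    using that by (cases s) (auto simp: hsum_le_def)
  moreover have "hsum_le le le' (HL x) (HL y) \<longleftrightarrow> le x y" for x y by (simp add: hsum_le_def)
  ultimately show ?thesis unfolding summand_embedding_def hsum_carrier_def by (auto simp: inj_def)
qed

lemma summand_embedding_HR: "summand_embedding (hsum_carrier A B) (hsum_le le le') B le' HR"
proof -
  have "(\<forall>x y. hsum_le le le' s (HR x) \<longrightarrow> hsum_le le le' s (HR y)) \<and>
      (\<forall>x y. hsum_le le le' (HR x) s \<longrightarrow> hsum_le le le' (HR y) s)" if "s \<notin> range HR" for s
    using that by (cases s) (auto simp: hsum_le_def)
  moreover have "hsum_le le le' (HR x) (HR y) \<longleftrightarrow> le' x y" for x y by (simp add: hsum_le_def)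
  ultimately show ?thesis unfolding summand_embedding_def hsum_carrier_def by (auto simp: inj_def)
qed

lemma antisymp_on_hsum:
  "antisymp_on A le \<Longrightarrow> antisymp_on B le' \<Longrightarrow> antisymp_on (hsum_carrier A B) (hsum_le le le')"
  unfolding antisymp_on_def hsum_carrier_def hsum_le_def by auto

lemma is_lub_hsum_bottom: "is_lub (hsum_carrier A B) (hsum_le le le') {} HBot"
  unfolding is_lub_def hsum_carrier_def hsum_le_def by simp

lemma hsum_carrier_outside_summands: "hsum_carrier A B - range HL - range HR = {HBot, HTop}"
  unfolding hsum_carrier_def by auto

lemma bigTheta_CS_summands:
  assumes e1: "summand_embedding V leV A le e1" and e2: "summand_embedding V leV B le' e2"
    and antisym: "antisymp_on V leV" and bot: "is_lub V leV {} botV"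
    and rest: "finite (V - range e1 - range e2)" and botA: "is_lub A le {} botA"
    and "bigTheta (CS A le) f" "bigTheta (CS B le') g"
  shows "bigTheta (CS V leV) (\<lambda>n. f n + g n)"
proof (rule bigTheta_bounded_ratio[OF bigTheta_add[OF assms(7,8)]])
  fix n
  show "CS A le n + CS B le' n \<le> 2 * CS V leV n"
    unfolding mult_2
    by (intro add_mono CS_le_CS_summand[OF e1 antisym bot] CS_le_CS_summand[OF e2 antisym bot])
  let ?k = "card (V - range e1 - range e2)"
  obtain S where "S \<subseteq> V" "finite S" "card S \<le> n" "CS V leV n = card (closure_set V leV S)"
    using CS_attained[OF antisym] by blast
  then have "CS V leV n \<le> ?k + CS A le n + CS B le' n"
    using card_closure_set_summands_le[OF e1 e2 antisym rest] by simp
  also have "\<dots> \<le> ?k * CS A le n + CS A le n + CS B le' n"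
    using mult_le_mono2[OF CS_pos[OF summand_antisymp_on[OF e1 antisym] botA], of ?k] by simp
  also have "\<dots> \<le> (?k + 1) * (CS A le n + CS B le' n)"
    by (simp add: algebra_simps)
  finally show "CS V leV n \<le> (?k + 1) * (CS A le n + CS B le' n)" .
qed

theorem mainTheorem5:
  fixes A :: "'a set" and le :: "'a \<Rightarrow> 'a \<Rightarrow> bool"
    and B :: "'b set" and le' :: "'b \<Rightarrow> 'b \<Rightarrow> bool"
    and f g :: "nat \<Rightarrow> nat"
  assumes "is_lattice A le" and "is_lattice B le'"
    and "bigTheta (CS A le) f" and "bigTheta (CS B le') g"
  shows "bigTheta (CS (vsum_carrier A B) (vsum_le le le')) (\<lambda>n. f n + g n)
       \<and> bigTheta (CS (hsum_carrier A B) (hsum_le le le')) (\<lambda>n. f n + g n)"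
proof
  obtain botA where botA: "is_lub A le {} botA" using is_lattice_obtains_bottom[OF assms(1)] .
  have antisymA: "antisymp_on A le" and antisymB: "antisymp_on B le'"
    using assms(1,2) by (simp_all add: is_lattice_antisymp_on)
  have vsum_rest: "finite (vsum_carrier A B - range Inl - range Inr)"
    and hsum_rest: "finite (hsum_carrier A B - range HL - range HR)"
    by (simp_all add: vsum_carrier_outside_summands hsum_carrier_outside_summands)
  show "bigTheta (CS (vsum_carrier A B) (vsum_le le le')) (\<lambda>n. f n + g n)"
    by (rule bigTheta_CS_summands[OF summand_embedding_Inl summand_embedding_Inr
          antisymp_on_vsum[OF antisymA antisymB] is_lub_vsum_bottom[OF botA] vsum_rest botA assms(3,4)])
  show "bigTheta (CS (hsum_carrier A B) (hsum_le le le')) (\<lambda>n. f n + g n)"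
    by (rule bigTheta_CS_summands[OF summand_embedding_HL summand_embedding_HR
          antisymp_on_hsum[OF antisymA antisymB] is_lub_hsum_bottom hsum_rest botA assms(3,4)])
qed

end
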